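(* Let $V$ be a vector space of dimension $n$ over a field $\mathcal{F}$, let $\Lambda=(\lambda_{i,j})_{i,j=1,\dots,n}$ be an $n\times n$ matrix all of whose entries are non-zero elements of $\mathcal{F}$, and let $\mathcal{V}=(v_1,\dots,v_n)$ be a basis of $V$. Let $\phi:V\to V$ be a map (not assumed linear) such that for every $v,w\in V$ there is an endomorphism $\phi_{v,w}$ of $V$ which is $\Lambda$-symmetric with respect to $\mathcal{V}$ and satisfies $\phi(v)=\phi_{v,w}(v)$ and $\phi(w)=\phi_{v,w}(w)$. Then $\phi$ is linear.
   Context: For a linear map $\psi:V\to V$, its matrix with respect to $\mathcal{V}$ is $(x_{i,j})_{i,j=1}^n$ where $\psi(v_j)=\sum_{i=1}^n x_{i,j}v_i$. An endomorphism $\psi$ is called $\Lambda$-symmetric with respect to $\mathcal{V}$ if its matrix with respect to $\mathcal{V}$ has the form $(\lambda_{i,j}a_{i,j})_{i,j=1}^n$ for some symmetric matrix $A=(a_{i,j})$ (i.e. $a_{i,j}=a_{j,i}$ for all $i,j$). *)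

theory Defs
  imports Main "HOL.Vector_Spaces"
begin

text \<open>Vector space V: the whole carrier type 'b with scalar multiplication
  scale over the field 'a (locale vector_space). A basis indexed by 1..n.\<close>

definition is_indexed_basis ::
  "('a::field \<Rightarrow> 'b::ab_group_add \<Rightarrow> 'b) \<Rightarrow> nat \<Rightarrow> (nat \<Rightarrow> 'b) \<Rightarrow> bool" where
  "is_indexed_basis scale n v \<longleftrightarrow>
     inj_on v {1..n} \<and>
     \<not> module.dependent scale (v ` {1..n}) \<and>
     module.span scale (v ` {1..n}) = UNIV"

definition lambda_symmetric ::
  "('a::field \<Rightarrow> 'b::ab_group_add \<Rightarrow> 'b) \<Rightarrow> nat \<Rightarrow> (nat \<Rightarrow> nat \<Rightarrow> 'a) \<Rightarrow> (nat \<Rightarrow> 'b)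
     \<Rightarrow> ('b \<Rightarrow> 'b) \<Rightarrow> bool" where
  "lambda_symmetric scale n lam v psi \<longleftrightarrow>
     Vector_Spaces.linear scale scale psi \<and>
     (\<exists>a :: nat \<Rightarrow> nat \<Rightarrow> 'a.
        (\<forall>i\<in>{1..n}. \<forall>j\<in>{1..n}. a i j = a j i) \<and>
        (\<forall>j\<in>{1..n}. psi (v j) = (\<Sum>i\<in>{1..n}. scale (lam i j * a i j) (v i))))"

end

theory Submission
  imports Defs
begin

text \<open>If \<open>\<psi>\<close> has matrix \<open>(\<lambda>\<^sub>i\<^sub>j a\<^sub>i\<^sub>j)\<close> with \<open>a\<close> symmetric, then the
  coefficient \<open>a\<^sub>k\<^sub>j = a\<^sub>j\<^sub>k\<close> is the \<open>j\<close>-th coordinate of \<open>\<psi> v\<^sub>k\<close> divided by \<open>\<lambda>\<^sub>j\<^sub>k\<close>,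
  so the \<open>k\<close>-th coordinate of \<open>\<psi> x\<close> is \<open>\<Sum>\<^sub>j (\<lambda>\<^sub>k\<^sub>j / \<lambda>\<^sub>j\<^sub>k) (\<psi> v\<^sub>k)\<^sub>j x\<^sub>j\<close>.
  Choosing \<open>\<psi>\<close> to agree with \<open>\<phi>\<close> at \<open>x\<close> and at \<open>v\<^sub>k\<close> shows that the \<open>k\<close>-th
  coordinate of \<open>\<phi> x\<close> is a linear form in the coordinates of \<open>x\<close> whose coefficients
  depend only on \<open>k\<close>; hence \<open>\<phi>\<close> is given by a matrix and is linear.\<close>

locale indexed_basis = vector_space scale
  for scale :: "'a::field \<Rightarrow> 'b::ab_group_add \<Rightarrow> 'b" (infixr \<open>*s\<close> 75) +
  fixes n :: nat and v :: "nat \<Rightarrow> 'b"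
  assumes is_indexed_basis: "is_indexed_basis scale n v"
begin

text \<open>A constant rather than \<open>v ` {1..n}\<close>: the simplifier rewrites \<open>{1..n}\<close> to
  \<open>{Suc 0..n}\<close>, which would stop \<open>span_basis\<close> from firing as a rewrite rule.\<close>

definition basis_vectors :: "'b set" where
  "basis_vectors = v ` {1..n}"

definition coord :: "nat \<Rightarrow> 'b \<Rightarrow> 'a" where
  "coord k x = representation basis_vectors x (v k)"

lemma inj_on_basis: "inj_on v {1..n}"
  and independent_basis: "independent basis_vectors"
  and span_basis: "span basis_vectors = UNIV"
  using is_indexed_basis unfolding is_indexed_basis_def basis_vectors_def by auto

lemma finite_basis_vectors: "finite basis_vectors"
  by (simp add: basis_vectors_def)

lemma coord_add: "coord k (x + y) = coord k x + coord k y"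
  unfolding coord_def by (simp add: representation_add[OF independent_basis] span_basis)

lemma coord_sum: "coord k (\<Sum>j\<in>J. f j) = (\<Sum>j\<in>J. coord k (f j))"
  unfolding coord_def by (simp add: representation_sum[OF independent_basis] span_basis)

lemma coord_scale: "coord k (c *s x) = c * coord k x"
  unfolding coord_def by (simp add: representation_scale[OF independent_basis] span_basis)

lemma basis_expansion: "x = (\<Sum>k\<in>{1..n}. coord k x *s v k)"
proof -
  have "(\<Sum>b\<in>basis_vectors. representation basis_vectors x b *s b) = x"
    by (rule sum_representation_eq[OF independent_basis])
      (simp_all add: span_basis finite_basis_vectors)
  then show ?thesis
    unfolding coord_def basis_vectors_def sum.reindex[OF inj_on_basis] o_def by simp
qed

lemma coord_basis:
  assumes "j \<in> {1..n}" "k \<in> {1..n}"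
  shows "coord k (v j) = (if k = j then 1 else 0)"
  using representation_basis[OF independent_basis, of "v j"] assms inj_on_basis
  unfolding coord_def basis_vectors_def by (auto dest: inj_onD)

lemma coord_lincomb:
  assumes "k \<in> {1..n}"
  shows "coord k (\<Sum>j\<in>{1..n}. c j *s v j) = c k"
proof -
  have "coord k (\<Sum>j\<in>{1..n}. c j *s v j) = (\<Sum>j\<in>{1..n}. c j * coord k (v j))"
    by (simp add: coord_sum coord_scale)
  also have "\<dots> = (\<Sum>j\<in>{1..n}. if j = k then c j else 0)"
    using assms by (intro sum.cong) (auto simp: coord_basis)
  finally show ?thesis
    using assms by simp
qed

lemma coord_eqI:
  assumes "\<And>k. k \<in> {1..n} \<Longrightarrow> coord k x = coord k y"
  shows "x = y"
  by (metis (no_types, lifting) assms basis_expansion sum.cong)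

lemma linear_if_coord_matrix:
  assumes "\<And>k x. k \<in> {1..n} \<Longrightarrow> coord k (f x) = (\<Sum>j\<in>{1..n}. m k j * coord j x)"
  shows "Vector_Spaces.linear (*s) (*s) f"
proof -
  have "f (x + y) = f x + f y" for x y
    by (rule coord_eqI) (simp add: assms coord_add sum.distrib distrib_left)
  moreover have "f (c *s x) = c *s f x" for c x
    by (rule coord_eqI) (simp add: assms coord_scale sum_distrib_left ac_simps)
  ultimately show ?thesis
    unfolding module_hom_iff_linear[symmetric] module_hom_iff
    using module_axioms by blast
qed

lemma coord_linear_image:
  assumes "Vector_Spaces.linear (*s) (*s) \<psi>" "k \<in> {1..n}"
  shows "coord k (\<psi> x) = (\<Sum>j\<in>{1..n}. coord k (\<psi> (v j)) * coord j x)"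
proof -
  interpret linear "(*s)" "(*s)" \<psi> by fact
  have "\<psi> x = (\<Sum>j\<in>{1..n}. coord j x *s \<psi> (v j))"
    by (subst basis_expansion) (simp add: sum scale)
  then show ?thesis
    by (simp add: coord_sum coord_scale ac_simps)
qed

lemma lambda_symmetric_coord_swap:
  assumes "lambda_symmetric (*s) n lam v \<psi>" "j \<in> {1..n}" "k \<in> {1..n}"
  shows "lam k j * coord j (\<psi> (v k)) = lam j k * coord k (\<psi> (v j))"
proof -
  obtain a where sym: "\<forall>i\<in>{1..n}. \<forall>j\<in>{1..n}. a i j = a j i"
    and matrix: "\<forall>j\<in>{1..n}. \<psi> (v j) = (\<Sum>i\<in>{1..n}. (lam i j * a i j) *s v i)"
    using assms(1) unfolding lambda_symmetric_def by blast
  have "coord i (\<psi> (v j)) = lam i j * a i j" if "i \<in> {1..n}" "j \<in> {1..n}" for i j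
    using that matrix coord_lincomb[OF that(1)] by simp
  then show ?thesis
    using assms(2,3) sym by simp
qed

lemma lambda_symmetric_coord_image:
  assumes "lambda_symmetric (*s) n lam v \<psi>" "\<forall>i\<in>{1..n}. \<forall>j\<in>{1..n}. lam i j \<noteq> 0"
    and "k \<in> {1..n}"
  shows "coord k (\<psi> x) = (\<Sum>j\<in>{1..n}. lam k j / lam j k * coord j (\<psi> (v k)) * coord j x)"
proof -
  have "coord k (\<psi> x) = (\<Sum>j\<in>{1..n}. coord k (\<psi> (v j)) * coord j x)"
    using assms(1,3) unfolding lambda_symmetric_def by (simp add: coord_linear_image)
  also have "\<dots> = (\<Sum>j\<in>{1..n}. lam k j / lam j k * coord j (\<psi> (v k)) * coord j x)"
  proof (rule sum.cong)
    fix j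
    assume j: "j \<in> {1..n}"
    then have "lam k j * coord j (\<psi> (v k)) = lam j k * coord k (\<psi> (v j))" "lam j k \<noteq> 0"
      using lambda_symmetric_coord_swap[OF assms(1) j assms(3)] assms(2,3) by auto
    then show "coord k (\<psi> (v j)) * coord j x = lam k j / lam j k * coord j (\<psi> (v k)) * coord j x"
      by (simp add: field_simps)
  qed simp
  finally show ?thesis .
qed

lemma linear_if_pairwise_lambda_symmetric:
  assumes "\<forall>i\<in>{1..n}. \<forall>j\<in>{1..n}. lam i j \<noteq> 0"
    and "\<forall>x y. \<exists>\<psi>. lambda_symmetric (*s) n lam v \<psi> \<and> \<phi> x = \<psi> x \<and> \<phi> y = \<psi> y"
  shows "Vector_Spaces.linear (*s) (*s) \<phi>"
proof (rule linear_if_coord_matrix)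
  fix k x
  assume k: "k \<in> {1..n}"
  obtain \<psi> where "lambda_symmetric (*s) n lam v \<psi>" "\<phi> x = \<psi> x" "\<phi> (v k) = \<psi> (v k)"
    using assms(2) by blast
  then show "coord k (\<phi> x) = (\<Sum>j\<in>{1..n}. lam k j / lam j k * coord j (\<phi> (v k)) * coord j x)"
    using lambda_symmetric_coord_image[OF _ assms(1) k] by simp
qed

end

theorem theorem2p3:
  fixes scale :: "'a::field \<Rightarrow> 'b::ab_group_add \<Rightarrow> 'b"
    and n :: nat
    and lam :: "nat \<Rightarrow> nat \<Rightarrow> 'a"
    and v :: "nat \<Rightarrow> 'b"
    and \<phi> :: "'b \<Rightarrow> 'b"
  assumes "vector_space scale"
    and "\<forall>i\<in>{1..n}. \<forall>j\<in>{1..n}. lam i j \<noteq> 0"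
    and "is_indexed_basis scale n v"
    and "\<forall>x y. \<exists>\<psi>. lambda_symmetric scale n lam v \<psi> \<and> \<phi> x = \<psi> x \<and> \<phi> y = \<psi> y"
  shows "Vector_Spaces.linear scale scale \<phi>"
proof -
  interpret indexed_basis scale n v
    using assms(1,3) by (simp add: indexed_basis_def indexed_basis_axioms_def)
  show ?thesis
    using linear_if_pairwise_lambda_symmetric[OF assms(2,4)] .
qed

end
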